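(* Assume the Setting below. Let $(x_p)\subset\Omega$ be such that $\mu_p^{-2}:=p|u_p(x_p)|^{p-1}\to+\infty$, and assume that the rescaled functions $$v_p(x):=\frac{p}{u_p(x_p)}\left(u_p(x_p+\mu_px)-u_p(x_p)\right)$$ converge to $U(x)=\log\left(\frac{1}{1+\frac18|x|^2}\right)^2$ in $C^1_{loc}\left(\mathbb{R}^2\setminus\{-\lim_p \frac{x_p}{\mu_p}\}\right)$ as $p\to+\infty$. Then $\frac{|x_p|}{\mu_p}\to0$ as $p\to+\infty$. Consequently $v_p\to U$ in $C^1_{loc}(\mathbb{R}^2\setminus\{0\})$.
   Context: Setting: $\Omega\subset\mathbb{R}^2$ is a simply connected bounded smooth domain invariant under a cyclic group $G$ of rotations about the origin $O$, with $|G|\ge 4e$. $(u_p)_{p>1}$ is a family of sign-changing solutions of $-\Delta u=|u|^{p-1}u$ in $\Omega$, $u=0$ on $\partial\Omega$, which are $G$-symmetric ($u_p\circ g=u_p$ for $g\in G$), have exactly two nodal regions, whose nodal line $NL_p:=\{x\in\Omega:u_p(x)=0\}$ satisfies $NL_p\cap\partial\Omega=\emptyset$, $O\notin NL_p$, and with $p\int_\Omega|\nabla u_p|^2\le\alpha\,8\pi e$ for some $\alpha<5$ and $p$ large; $\|u_p\|_\infty=\|u_p^+\|_\infty$. Limits are along a sequence $p\to+\infty$ along which $x_p/\mu_p$ converges. *)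

theory Defs
  imports "HOL-Analysis.Analysis"
begin

text \<open>The plane R^2 is identified with the complex numbers.\<close>

definition vderiv_fun :: "(real \<Rightarrow> complex) \<Rightarrow> real \<Rightarrow> complex" where
  "vderiv_fun g = (\<lambda>t. vector_derivative g (at t))"

text \<open>Smooth boundary of a bounded simply connected planar domain: the boundary is
  a single regular C-infinity simple closed curve.\<close>
definition smooth_boundary :: "complex set \<Rightarrow> bool" where
  "smooth_boundary \<Omega> \<longleftrightarrow> (\<exists>\<gamma> :: real \<Rightarrow> complex.
      (\<forall>t. \<gamma> (t + 1) = \<gamma> t) \<and>
      (\<forall>n t. ((vderiv_fun ^^ n) \<gamma>) differentiable (at t)) \<and>
      (\<forall>t. vector_derivative \<gamma> (at t) \<noteq> 0) \<and>
      inj_on \<gamma> {0..<1} \<and>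
      frontier \<Omega> = \<gamma> ` {0..1})"

definition pdx :: "(complex \<Rightarrow> real) \<Rightarrow> complex \<Rightarrow> real" where
  "pdx f z = deriv (\<lambda>t. f (z + of_real t)) 0"

definition pdy :: "(complex \<Rightarrow> real) \<Rightarrow> complex \<Rightarrow> real" where
  "pdy f z = deriv (\<lambda>t. f (z + \<i> * of_real t)) 0"

definition C2_on :: "complex set \<Rightarrow> (complex \<Rightarrow> real) \<Rightarrow> bool" where
  "C2_on S f \<longleftrightarrow>
     (\<forall>g\<in>{f, pdx f, pdy f}. continuous_on S g \<and> (\<forall>z\<in>S. g differentiable (at z))) \<and>
     (\<forall>g\<in>{pdx (pdx f), pdx (pdy f), pdy (pdx f), pdy (pdy f)}. continuous_on S g)"

definition laplacian :: "(complex \<Rightarrow> real) \<Rightarrow> complex \<Rightarrow> real" where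
  "laplacian f z = pdx (pdx f) z + pdy (pdy f) z"

definition grad_sq :: "(complex \<Rightarrow> real) \<Rightarrow> complex \<Rightarrow> real" where
  "grad_sq f z = (pdx f z)\<^sup>2 + (pdy f z)\<^sup>2"

definition C1loc_conv ::
  "(nat \<Rightarrow> complex \<Rightarrow> real) \<Rightarrow> (nat \<Rightarrow> complex set) \<Rightarrow> (complex \<Rightarrow> real) \<Rightarrow> complex set \<Rightarrow> bool" where
  "C1loc_conv f D g A \<longleftrightarrow>
     (\<forall>K. compact K \<and> K \<subseteq> A \<longrightarrow>
        (\<forall>\<^sub>F n in sequentially. K \<subseteq> D n \<and> (\<forall>z\<in>K. f n differentiable (at z))) \<and>
        (\<forall>e>0. \<forall>\<^sub>F n in sequentially. \<forall>z\<in>K.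
            \<bar>f n z - g z\<bar> < e \<and>
            onorm (\<lambda>h. frechet_derivative (f n) (at z) h - frechet_derivative g (at z) h) < e))"

definition Ububble :: "complex \<Rightarrow> real" where
  "Ububble z = ln ((1 / (1 + (cmod z)\<^sup>2 / 8))\<^sup>2)"

end

theory Submission
  imports Defs
begin

text \<open>For the generator \<open>c \<noteq> 1\<close> of the rotation group, \<open>u\<^sub>p(c x\<^sub>p) = u\<^sub>p(x\<^sub>p)\<close> says that \<open>v\<^sub>p\<close>
  vanishes at \<open>w\<^sub>p = (c - 1) x\<^sub>p/\<mu>\<^sub>p\<close>. If \<open>x\<^sub>p/\<mu>\<^sub>p \<rightarrow> L \<noteq> 0\<close>, then \<open>w\<^sub>p \<rightarrow> (c - 1) L\<close>, a point
  different from both the singular point \<open>-L\<close> and the origin; local uniform convergence then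
  forces \<open>U((c - 1) L) = 0\<close>, whereas \<open>U\<close> vanishes only at the origin.\<close>

lemma cis_2pi_div_neq_1:
  fixes k :: real
  assumes "k > 1"
  shows "cis (2 * pi / k) \<noteq> 1"
proof
  assume "cis (2 * pi / k) = 1"
  then have "cos (2 * pi / k) = 1"
    by (metis cis.sel(1) one_complex.sel(1))
  then obtain i :: int where i: "2 * pi / k = i * 2 * pi"
    by (auto simp: cos_one_2pi_int)
  have "1 / k = (2 * pi / k) / (2 * pi)"
    by simp
  also have "\<dots> = i"
    unfolding i by simp
  finally have "1 / k = i" .
  moreover have "0 < 1 / k" "1 / k < 1"
    using assms by auto
  ultimately show False
    by simp
qed

lemma continuous_on_Ububble: "continuous_on UNIV Ububble"
proof -
  have "1 + (cmod z)\<^sup>2 / 8 \<noteq> 0" for z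
    by (smt (verit) zero_le_divide_iff zero_le_power2)
  then show ?thesis
    unfolding Ububble_def by (intro continuous_intros) auto
qed

lemma Ububble_eq_0_iff: "Ububble z = 0 \<longleftrightarrow> z = 0"
proof
  assume U0: "Ububble z = 0"
  show "z = 0"
  proof (rule ccontr)
    assume "z \<noteq> 0"
    then have "(cmod z)\<^sup>2 / 8 > 0"
      by simp
    then have "0 < (1 / (1 + (cmod z)\<^sup>2 / 8))\<^sup>2" "(1 / (1 + (cmod z)\<^sup>2 / 8))\<^sup>2 < 1"
      by (simp_all add: power_less_one_iff add_pos_pos add_nonneg_eq_0_iff)
    then have "Ububble z < 0"
      unfolding Ububble_def by simp
    with U0 show False
      by simp
  qed
qed (simp add: Ububble_def)

lemma C1loc_conv_tendsto_compose:
  assumes conv: "C1loc_conv f D g A" and "open A" "w0 \<in> A"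
    and "isCont g w0" and w: "w \<longlonglongrightarrow> w0"
  shows "(\<lambda>n. f n (w n)) \<longlonglongrightarrow> g w0"
proof -
  obtain r where r: "r > 0" "cball w0 r \<subseteq> A"
    using \<open>open A\<close> \<open>w0 \<in> A\<close> open_contains_cball by blast
  have in_ball: "\<forall>\<^sub>F n in sequentially. w n \<in> cball w0 r"
    using w r(1) unfolding tendsto_iff by (auto elim!: allE[of _ r] eventually_mono simp: dist_commute)
  have "(\<lambda>n. f n (w n) - g (w n)) \<longlonglongrightarrow> 0"
  proof (rule LIMSEQ_I)
    fix e :: real
    assume "e > 0"
    then have "\<forall>\<^sub>F n in sequentially. \<forall>z\<in>cball w0 r. \<bar>f n z - g z\<bar> < e"
      using conv r unfolding C1loc_conv_def
      by (auto elim!: allE[of _ "cball w0 r"] allE[of _ e] elim: eventually_mono)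
    with in_ball have "\<forall>\<^sub>F n in sequentially. norm (f n (w n) - g (w n) - 0) < e"
      by eventually_elim simp
    then show "\<exists>no. \<forall>n\<ge>no. norm (f n (w n) - g (w n) - 0) < e"
      by (simp add: eventually_sequentially)
  qed
  moreover have "(\<lambda>n. g (w n)) \<longlonglongrightarrow> g w0"
    using \<open>isCont g w0\<close> w by (rule isCont_tendsto_compose)
  ultimately show ?thesis
    using tendsto_add by fastforce
qed

theorem proposition3p8:
  fixes \<Omega> :: "complex set" and k :: nat and u :: "real \<Rightarrow> complex \<Rightarrow> real"
    and p :: "nat \<Rightarrow> real" and x :: "nat \<Rightarrow> complex" and \<mu> :: "nat \<Rightarrow> real"
    and v :: "nat \<Rightarrow> complex \<Rightarrow> real" and L :: complex
  assumes dom: "open \<Omega>" "bounded \<Omega>" "connected \<Omega>" "simply_connected \<Omega>" "smooth_boundary \<Omega>"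
    and grp: "real k \<ge> 4 * exp 1"
    and inv: "(\<lambda>z. cis (2 * pi / real k) * z) ` \<Omega> = \<Omega>"
    and sol: "\<And>q. q > 1 \<Longrightarrow> C2_on \<Omega> (u q) \<and> continuous_on (closure \<Omega>) (u q)
               \<and> (\<forall>z\<in>\<Omega>. - laplacian (u q) z = \<bar>u q z\<bar> powr (q - 1) * u q z)
               \<and> (\<forall>z\<in>frontier \<Omega>. u q z = 0)"
    and sym: "\<And>q z. q > 1 \<Longrightarrow> z \<in> \<Omega> \<Longrightarrow> u q (cis (2 * pi / real k) * z) = u q z"
    and sgn: "\<And>q. q > 1 \<Longrightarrow> (\<exists>z\<in>\<Omega>. u q z > 0) \<and> (\<exists>z\<in>\<Omega>. u q z < 0)"
    and nodal: "\<And>q. q > 1 \<Longrightarrow> card (components {z\<in>\<Omega>. u q z \<noteq> 0}) = 2"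
    and NLbd: "\<And>q. q > 1 \<Longrightarrow> closure {z\<in>\<Omega>. u q z = 0} \<inter> frontier \<Omega> = {}"
    and NL0: "\<And>q. q > 1 \<Longrightarrow> 0 \<notin> {z\<in>\<Omega>. u q z = 0}"
    and energy: "\<exists>\<alpha> < 5. \<exists>P. \<forall>q\<ge>P. q > 1 \<longrightarrow>
               grad_sq (u q) integrable_on \<Omega> \<and>
               q * integral \<Omega> (grad_sq (u q)) \<le> \<alpha> * 8 * pi * exp 1"
    and supn: "\<And>q. q > 1 \<Longrightarrow> (SUP z\<in>\<Omega>. \<bar>u q z\<bar>) = (SUP z\<in>\<Omega>. max (u q z) 0)"
    and pseq: "\<And>n. p n > 1" "filterlim p at_top sequentially"
    and xin: "\<And>n. x n \<in> \<Omega>"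
    and mu_def: "\<And>n. \<mu> n = 1 / sqrt (p n * \<bar>u (p n) (x n)\<bar> powr (p n - 1))"
    and blowup: "filterlim (\<lambda>n. p n * \<bar>u (p n) (x n)\<bar> powr (p n - 1)) at_top sequentially"
    and v_def: "\<And>n z. v n z = p n / u (p n) (x n) * (u (p n) (x n + of_real (\<mu> n) * z) - u (p n) (x n))"
    and xconv: "(\<lambda>n. x n / of_real (\<mu> n)) \<longlonglongrightarrow> L"
    and conv: "C1loc_conv v (\<lambda>n. {z. x n + of_real (\<mu> n) * z \<in> \<Omega>}) Ububble (- {- L})"
  shows "(\<lambda>n. cmod (x n) / \<mu> n) \<longlonglongrightarrow> 0
       \<and> C1loc_conv v (\<lambda>n. {z. x n + of_real (\<mu> n) * z \<in> \<Omega>}) Ububble (- {0})"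
proof -
  define c where "c = cis (2 * pi / real k)"
  define w where "w n = (c - 1) * (x n / of_real (\<mu> n))" for n
  have "c \<noteq> 1"
    unfolding c_def using grp exp_gt_one[of 1] by (intro cis_2pi_div_neq_1) linarith
  have v_w: "v n (w n) = 0" for n
    using sym[OF pseq(1) xin, of n] by (cases "\<mu> n = 0") (simp_all add: v_def w_def c_def field_simps)
  have "L = 0"
  proof (rule ccontr)
    assume "L \<noteq> 0"
    have "(c - 1) * L \<in> - {- L}"
      using \<open>L \<noteq> 0\<close> by (auto simp: c_def algebra_simps)
    then have "(\<lambda>n. v n (w n)) \<longlonglongrightarrow> Ububble ((c - 1) * L)"
      using continuous_on_Ububble unfolding w_def
      by (intro C1loc_conv_tendsto_compose[OF conv] tendsto_intros xconv)
         (auto simp: continuous_on_eq_continuous_at)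
    moreover have "(\<lambda>n. v n (w n)) \<longlonglongrightarrow> 0"
      by (simp add: v_w)
    ultimately have "Ububble ((c - 1) * L) = 0"
      by (rule LIMSEQ_unique)
    with \<open>c \<noteq> 1\<close> \<open>L \<noteq> 0\<close> show False
      by (simp add: Ububble_eq_0_iff)
  qed
  have "\<mu> n \<ge> 0" for n
    using mu_def[of n] pseq(1)[of n] by simp
  then have "cmod (x n / of_real (\<mu> n)) = cmod (x n) / \<mu> n" for n
    by (simp add: norm_divide)
  then have "(\<lambda>n. cmod (x n) / \<mu> n) \<longlonglongrightarrow> 0"
    using tendsto_norm[OF xconv] \<open>L = 0\<close> by simp
  with conv \<open>L = 0\<close> show ?thesis
    by simp
qed

end
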